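(* Let $c\ge2$, let $\Gamma=(V,E)$ be a $c$-uniform unoriented hypergraph with no isolated vertices, let $k\ge2$ and let $V_1,\dots,V_k$ be the color classes of a proper strong $k$-coloring of $\Gamma$. Then the functions $g_{ij}$ (for all distinct $i,j$) are eigenfunctions of the normalized Laplacian $L$ if and only if for all $i=1,\dots,k$ and all $v\in V$, \[ \bigl|\{e\in E: v\in e,\ e\cap V_i\neq\varnothing\}\bigr|=\begin{cases}\dfrac{(c-1)\deg v}{k-1}, & v\notin V_i,\\[2mm] \deg v, & v\in V_i.\end{cases} \] In this case the corresponding eigenvalue is $\dfrac{k-c}{k-1}$.
   Context: A hypergraph has finite vertex set $V$ and edge set $E\subseteq\mathcal P(V)$; it is $c$-uniform if $|e|=c$ for all $e$, and unoriented means all incidences have orientation $+1$. $\deg v=|\{e\in E: v\in e\}|\ge1$, $D=\mathrm{diag}(\deg v)$, adjacency $A_{v,v}=0$ and $A_{v,w}=-|\{e\in E: v,w\in e\}|$ for $v\ne w$, normalized Laplacian $L=\mathrm{Id}-D^{-1}A$. A proper strong $k$-coloring is a map $V\to\{1,\dots,k\}$ such that any two distinct vertices in a common edge receive different colors. For color classes $V_1,\dots,V_k$ and distinct $i,j$, $g_{ij}(w)=1$ if $w\in V_i$, $-1$ if $w\in V_j$, $0$ otherwise. *)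

theory Defs
  imports Complex_Main
begin

text \<open>A hypergraph on vertex set V (finite) with edge set E, a set of subsets of V.
  Unoriented: all incidences have orientation +1, so no orientation data is needed.\<close>

definition hypergraph :: "'a set \<Rightarrow> 'a set set \<Rightarrow> bool" where
  "hypergraph V E \<longleftrightarrow> finite V \<and> E \<subseteq> Pow V"

definition uniform :: "nat \<Rightarrow> 'a set set \<Rightarrow> bool" where
  "uniform c E \<longleftrightarrow> (\<forall>e\<in>E. card e = c)"

definition hdeg :: "'a set set \<Rightarrow> 'a \<Rightarrow> nat" where
  "hdeg E v = card {e\<in>E. v \<in> e}"

definition hadj :: "'a set set \<Rightarrow> 'a \<Rightarrow> 'a \<Rightarrow> real" where
  "hadj E v w = (if v = w then 0 else - real (card {e\<in>E. v \<in> e \<and> w \<in> e}))"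

definition nlap :: "'a set \<Rightarrow> 'a set set \<Rightarrow> ('a \<Rightarrow> real) \<Rightarrow> 'a \<Rightarrow> real" where
  "nlap V E f v = f v - (1 / real (hdeg E v)) * (\<Sum>w\<in>V. hadj E v w * f w)"

definition eigenfunction_with :: "'a set \<Rightarrow> 'a set set \<Rightarrow> ('a \<Rightarrow> real) \<Rightarrow> real \<Rightarrow> bool" where
  "eigenfunction_with V E f mu \<longleftrightarrow> (\<exists>v\<in>V. f v \<noteq> 0) \<and> (\<forall>v\<in>V. nlap V E f v = mu * f v)"

definition eigenfunction :: "'a set \<Rightarrow> 'a set set \<Rightarrow> ('a \<Rightarrow> real) \<Rightarrow> bool" where
  "eigenfunction V E f \<longleftrightarrow> (\<exists>mu. eigenfunction_with V E f mu)"

definition proper_strong_coloring :: "'a set \<Rightarrow> 'a set set \<Rightarrow> nat \<Rightarrow> ('a \<Rightarrow> nat) \<Rightarrow> bool" where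
  "proper_strong_coloring V E k col \<longleftrightarrow>
     (\<forall>v\<in>V. col v \<in> {1..k}) \<and>
     (\<forall>e\<in>E. \<forall>v\<in>e. \<forall>w\<in>e. v \<noteq> w \<longrightarrow> col v \<noteq> col w)"

definition color_class :: "'a set \<Rightarrow> ('a \<Rightarrow> nat) \<Rightarrow> nat \<Rightarrow> 'a set" where
  "color_class V col i = {v\<in>V. col v = i}"

definition gfun :: "'a set \<Rightarrow> ('a \<Rightarrow> nat) \<Rightarrow> nat \<Rightarrow> nat \<Rightarrow> 'a \<Rightarrow> real" where
  "gfun V col i j w =
     (if w \<in> color_class V col i then 1 else if w \<in> color_class V col j then -1 else 0)"

end

theory Submission
  imports Defs "HOL-Library.Indicator_Function"
begin

text \<open>For a vertex v let B_i(v) (class_neighbours below) be \<Sum>_{e \<ni> v} |(e - {v}) \<inter> V_i|.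
  Since a strongly coloured edge contains at most one vertex of each colour, B_i(v) is 0 if
  v \<in> V_i and counts the edges at v meeting V_i otherwise, and
  L g_ij (v) = g_ij(v) + (B_i(v) - B_j(v)) / deg v. At a vertex outside V_i \<union> V_j the eigenvalue
  equation thus forces B_i(v) = B_j(v), so the k - 1 numbers B_i(v) with v \<notin> V_i coincide;
  their sum is (c - 1) deg v because every edge at v has c - 1 further vertices, which gives the
  condition. Conversely, under the condition every g_ij satisfies
  L g_ij = (1 - (c - 1)/(k - 1)) g_ij.\<close>


lemma hypergraph_edge_subset: "hypergraph V E \<Longrightarrow> e \<in> E \<Longrightarrow> e \<subseteq> V"
  by (auto simp: hypergraph_def)

lemma hypergraph_finite_edges: "hypergraph V E \<Longrightarrow> finite E"
  by (meson finite_Pow_iff finite_subset hypergraph_def)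

lemma hypergraph_finite_edge: "hypergraph V E \<Longrightarrow> e \<in> E \<Longrightarrow> finite e"
  by (meson finite_subset hypergraph_def hypergraph_edge_subset)

lemma hadj_sum_eq_edge_sum:
  assumes hg: "hypergraph V E"
  shows "(\<Sum>w\<in>V. hadj E v w * f w) = - (\<Sum>e\<in>{e\<in>E. v \<in> e}. \<Sum>w\<in>e - {v}. f w)"
proof -
  have finV: "finite V" and finEv: "finite {e\<in>E. v \<in> e}"
    using hg hypergraph_finite_edges[OF hg] by (auto simp: hypergraph_def)
  have "(\<Sum>e\<in>{e\<in>E. v \<in> e}. \<Sum>w\<in>e - {v}. f w)
      = (\<Sum>e\<in>{e\<in>E. v \<in> e}. \<Sum>w\<in>V. if w \<in> e \<and> w \<noteq> v then f w else 0)"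
  proof (rule sum.cong[OF refl])
    fix e assume "e \<in> {e\<in>E. v \<in> e}"
    then have "e - {v} = {w\<in>V. w \<in> e \<and> w \<noteq> v}"
      using hypergraph_edge_subset[OF hg] by auto
    then show "(\<Sum>w\<in>e - {v}. f w) = (\<Sum>w\<in>V. if w \<in> e \<and> w \<noteq> v then f w else 0)"
      by (simp add: sum.inter_filter[OF finV])
  qed
  also have "\<dots> = (\<Sum>w\<in>V. \<Sum>e\<in>{e\<in>E. v \<in> e}. if w \<in> e \<and> w \<noteq> v then f w else 0)"
    by (rule sum.swap)
  also have "\<dots> = (\<Sum>w\<in>V. - hadj E v w * f w)"
  proof (rule sum.cong[OF refl])
    fix w
    have "(\<Sum>e\<in>{e\<in>E. v \<in> e}. if w \<in> e \<and> w \<noteq> v then f w else 0)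
        = (if w = v then 0 else real (card {e\<in>{e\<in>E. v \<in> e}. w \<in> e}) * f w)"
      using sum.inter_filter[OF finEv, of "\<lambda>_. f w" "\<lambda>e. w \<in> e"] by auto
    also have "{e\<in>{e\<in>E. v \<in> e}. w \<in> e} = {e\<in>E. v \<in> e \<and> w \<in> e}" by auto
    finally show "(\<Sum>e\<in>{e\<in>E. v \<in> e}. if w \<in> e \<and> w \<noteq> v then f w else 0) = - hadj E v w * f w"
      by (simp add: hadj_def)
  qed
  finally show ?thesis by (simp add: sum_negf)
qed

lemma nlap_eq_edge_sum:
  "hypergraph V E \<Longrightarrow>
   nlap V E f v = f v + (\<Sum>e\<in>{e\<in>E. v \<in> e}. \<Sum>w\<in>e - {v}. f w) / real (hdeg E v)"
  by (simp add: nlap_def hadj_sum_eq_edge_sum)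

lemma gfun_eq_indicator_diff:
  "i \<noteq> j \<Longrightarrow>
   gfun V col i j w = indicator (color_class V col i) w - indicator (color_class V col j) w"
  by (auto simp: gfun_def color_class_def indicator_def)

lemma proper_strong_coloring_colors:
  "proper_strong_coloring V E k col \<Longrightarrow> v \<in> V \<Longrightarrow> col v \<in> {1..k}"
  by (simp add: proper_strong_coloring_def)

lemma proper_strong_coloring_edge_class_unique:
  assumes "proper_strong_coloring V E k col" "e \<in> E"
    and "u \<in> e \<inter> color_class V col i" "w \<in> e \<inter> color_class V col i"
  shows "u = w"
proof (rule ccontr)
  assume "u \<noteq> w"
  then have "col u \<noteq> col w"
    using assms(1,2,3,4) by (simp add: proper_strong_coloring_def)
  then show False
    using assms(3,4) by (simp add: color_class_def)
qed

lemma proper_strong_coloring_edge_class_count: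
  assumes col: "proper_strong_coloring V E k col" and "finite e" "e \<in> E" "v \<in> e"
  shows "card ((e - {v}) \<inter> color_class V col i) =
         of_bool (v \<notin> color_class V col i \<and> e \<inter> color_class V col i \<noteq> {})"
proof -
  let ?Vi = "color_class V col i"
  have "card (e \<inter> ?Vi) \<le> 1"
    using proper_strong_coloring_edge_class_unique[OF col \<open>e \<in> E\<close>] \<open>finite e\<close>
    by (simp add: card_le_Suc0_iff_eq) blast
  moreover have "(e - {v}) \<inter> ?Vi = (if v \<in> ?Vi then {} else e \<inter> ?Vi)"
    using proper_strong_coloring_edge_class_unique[OF col \<open>e \<in> E\<close>, of v] \<open>v \<in> e\<close> by auto
  ultimately show ?thesis
    using \<open>finite e\<close> by (auto simp: le_Suc_eq)
qed

definition class_neighbours :: "'a set \<Rightarrow> 'a set set \<Rightarrow> ('a \<Rightarrow> nat) \<Rightarrow> nat \<Rightarrow> 'a \<Rightarrow> real" where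
  "class_neighbours V E col i v =
     (\<Sum>e\<in>{e\<in>E. v \<in> e}. \<Sum>w\<in>e - {v}. indicator (color_class V col i) w)"

lemma nlap_gfun:
  assumes "hypergraph V E" "i \<noteq> j"
  shows "nlap V E (gfun V col i j) v =
         gfun V col i j v + (class_neighbours V E col i v - class_neighbours V E col j v) / real (hdeg E v)"
  using assms by (simp add: nlap_eq_edge_sum gfun_eq_indicator_diff class_neighbours_def
      sum_subtractf diff_divide_distrib)

lemma class_neighbours_eq:
  assumes hg: "hypergraph V E" and col: "proper_strong_coloring V E k col"
  shows "class_neighbours V E col i v =
         (if v \<in> color_class V col i then 0
          else real (card {e\<in>E. v \<in> e \<and> e \<inter> color_class V col i \<noteq> {}}))"
proof -
  let ?Vi = "color_class V col i"
  have "class_neighbours V E col i v = (\<Sum>e\<in>{e\<in>E. v \<in> e}. of_bool (v \<notin> ?Vi \<and> e \<inter> ?Vi \<noteq> {}))"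
    unfolding class_neighbours_def
  proof (rule sum.cong[OF refl])
    fix e assume "e \<in> {e\<in>E. v \<in> e}"
    then show "(\<Sum>w\<in>e - {v}. indicator ?Vi w) = (of_bool (v \<notin> ?Vi \<and> e \<inter> ?Vi \<noteq> {}) :: real)"
      using hypergraph_finite_edge[OF hg] proper_strong_coloring_edge_class_count[OF col]
        sum_indicator_mult[of "e - {v}" ?Vi "\<lambda>_. 1::real"]
      by simp
  qed
  also have "\<dots> = (if v \<in> ?Vi then 0 else real (card {e\<in>E. v \<in> e \<and> e \<inter> ?Vi \<noteq> {}}))"
    using hypergraph_finite_edges[OF hg] by (simp add: of_bool_def sum.If_cases Int_def)
  finally show ?thesis .
qed

lemma sum_class_neighbours:
  assumes hg: "hypergraph V E" and unif: "uniform c E" and col: "proper_strong_coloring V E k col"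
  shows "(\<Sum>i\<in>{1..k}. class_neighbours V E col i v) = (real c - 1) * real (hdeg E v)"
proof -
  have "(\<Sum>i\<in>{1..k}. class_neighbours V E col i v)
      = (\<Sum>e\<in>{e\<in>E. v \<in> e}. \<Sum>w\<in>e - {v}. \<Sum>i\<in>{1..k}. indicator (color_class V col i) w)"
    unfolding class_neighbours_def sum.swap[where A = "{1..k}"] by (intro sum.cong refl sum.swap)
  also have "\<dots> = (\<Sum>e\<in>{e\<in>E. v \<in> e}. real c - 1)"
  proof (rule sum.cong[OF refl])
    fix e assume e: "e \<in> {e\<in>E. v \<in> e}"
    have "(\<Sum>i\<in>{1..k}. indicator (color_class V col i) w) = (1::real)" if "w \<in> e - {v}" for w
    proof -
      have "w \<in> V" using that e hypergraph_edge_subset[OF hg] by auto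
      then show ?thesis
        using proper_strong_coloring_colors[OF col] by (simp add: indicator_def color_class_def)
    qed
    moreover have "card (e - {v}) = c - 1" "c \<ge> 1"
      using e unif hypergraph_finite_edge[OF hg] card_0_eq[of e] by (auto simp: uniform_def)
    ultimately show "(\<Sum>w\<in>e - {v}. \<Sum>i\<in>{1..k}. indicator (color_class V col i) w) = real c - 1"
      by (simp add: of_nat_diff)
  qed
  finally show ?thesis by (simp add: hdeg_def)
qed

definition class_balanced :: "'a set \<Rightarrow> 'a set set \<Rightarrow> nat \<Rightarrow> nat \<Rightarrow> ('a \<Rightarrow> nat) \<Rightarrow> bool" where
  "class_balanced V E c k col \<longleftrightarrow>
     (\<forall>i\<in>{1..k}. \<forall>v\<in>V. v \<notin> color_class V col i \<longrightarrow>
        class_neighbours V E col i v = (real c - 1) * real (hdeg E v) / (real k - 1))"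

lemma class_incidence_condition_iff_class_balanced:
  assumes hg: "hypergraph V E" and col: "proper_strong_coloring V E k col"
  shows "(\<forall>i\<in>{1..k}. \<forall>v\<in>V.
            real (card {e\<in>E. v \<in> e \<and> e \<inter> color_class V col i \<noteq> {}}) =
              (if v \<notin> color_class V col i
               then (real c - 1) * real (hdeg E v) / (real k - 1)
               else real (hdeg E v)))
         \<longleftrightarrow> class_balanced V E c k col"
proof -
  have "{e\<in>E. v \<in> e \<and> e \<inter> color_class V col i \<noteq> {}} = {e\<in>E. v \<in> e}"
    if "v \<in> color_class V col i" for v i
    using that by auto
  then show ?thesis
    by (auto simp: class_balanced_def class_neighbours_eq[OF hg col] hdeg_def)
qed

lemma eigenfunctions_imp_class_balanced:
  assumes hg: "hypergraph V E" and unif: "uniform c E" and noiso: "\<forall>v\<in>V. hdeg E v \<ge> 1"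
    and col: "proper_strong_coloring V E k col"
    and eig: "\<forall>i\<in>{1..k}. \<forall>j\<in>{1..k}. i \<noteq> j \<longrightarrow> eigenfunction V E (gfun V col i j)"
  shows "class_balanced V E c k col"
  unfolding class_balanced_def
proof (intro ballI impI)
  fix i v assume i: "i \<in> {1..k}" and v: "v \<in> V" and vi: "v \<notin> color_class V col i"
  let ?B = "\<lambda>j. class_neighbours V E col j v"
  define m where "m = col v"
  have m: "m \<in> {1..k}" "v \<in> color_class V col m"
    using proper_strong_coloring_colors[OF col v] v by (auto simp: m_def color_class_def)
  have same: "?B j = ?B i" if j: "j \<in> {1..k} - {m}" for j
  proof (cases "j = i")
    case False
    have g0: "gfun V col i j v = 0"
      using j vi v by (auto simp: gfun_def color_class_def m_def)
    obtain mu where "eigenfunction_with V E (gfun V col i j) mu"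
      using eig i j False unfolding eigenfunction_def by (metis DiffD1)
    then have "nlap V E (gfun V col i j) v = 0"
      using v g0 by (auto simp: eigenfunction_with_def)
    then show ?thesis
      using nlap_gfun[OF hg, of i j col v] False g0 noiso v by fastforce
  qed simp
  have "(real c - 1) * real (hdeg E v) = ?B m + (\<Sum>j\<in>{1..k} - {m}. ?B j)"
    using sum_class_neighbours[OF hg unif col, of v] m(1) by (simp add: sum.remove)
  also have "\<dots> = (real k - 1) * ?B i"
    using same m class_neighbours_eq[OF hg col, of m v] by (simp add: of_nat_diff)
  finally have "(real k - 1) * ?B i = (real c - 1) * real (hdeg E v)" ..
  moreover have "real k - 1 > 0"
    using i m vi by (auto simp: color_class_def m_def)
  ultimately show "?B i = (real c - 1) * real (hdeg E v) / (real k - 1)"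
    by (simp add: field_simps)
qed

lemma class_balanced_imp_eigenfunction_with:
  assumes hg: "hypergraph V E" and Vne: "V \<noteq> {}" and c2: "c \<ge> 2"
    and noiso: "\<forall>v\<in>V. hdeg E v \<ge> 1" and k2: "k \<ge> 2"
    and col: "proper_strong_coloring V E k col" and bal: "class_balanced V E c k col"
    and ij: "i \<in> {1..k}" "j \<in> {1..k}" "i \<noteq> j"
  shows "eigenfunction_with V E (gfun V col i j) ((real k - real c) / (real k - 1))"
  unfolding eigenfunction_with_def
proof (intro conjI ballI)
  let ?B = "\<lambda>i v. class_neighbours V E col i v"
  let ?\<beta> = "\<lambda>v. (real c - 1) * real (hdeg E v) / (real k - 1)"
  have own: "?B i v = 0" if "v \<in> color_class V col i" for i v
    using that class_neighbours_eq[OF hg col] by simp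
  have other: "?B i v = ?\<beta> v" if "i \<in> {1..k}" "v \<in> V" "v \<notin> color_class V col i" for i v
    using that bal by (simp add: class_balanced_def)
  have \<beta>_pos: "?\<beta> v > 0" if "v \<in> V" for v
    using that c2 k2 noiso by (auto intro!: divide_pos_pos mult_pos_pos)
  show "\<exists>v\<in>V. gfun V col i j v \<noteq> 0"
  proof -
    obtain v where v: "v \<in> V" using Vne by blast
    have "color_class V col i \<noteq> {}"
    proof
      assume empty: "color_class V col i = {}"
      then have "?B i v = 0" using class_neighbours_eq[OF hg col, of i v] by simp
      moreover have "?B i v = ?\<beta> v" using other[OF ij(1) v] empty by blast
      ultimately show False using \<beta>_pos[OF v] by linarith
    qed
    then obtain w where "w \<in> color_class V col i" by blast
    then show ?thesis by (auto simp: gfun_def color_class_def)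
  qed
  fix v assume v: "v \<in> V"
  have d: "real (hdeg E v) > 0" using noiso v by force
  have mu: "(real k - real c) / (real k - 1) = 1 - ?\<beta> v / real (hdeg E v)"
    using d k2 by (simp add: field_simps)
  consider "v \<in> color_class V col i" | "v \<in> color_class V col j"
    | "v \<notin> color_class V col i" "v \<notin> color_class V col j" by blast
  then show "nlap V E (gfun V col i j) v = (real k - real c) / (real k - 1) * gfun V col i j v"
  proof cases
    case 1
    then have "v \<notin> color_class V col j" using ij(3) by (simp add: color_class_def)
    with 1 show ?thesis
      using nlap_gfun[OF hg ij(3)] own other[OF ij(2) v] mu by (simp add: gfun_def diff_divide_distrib)
  next
    case 2
    then have "v \<notin> color_class V col i" using ij(3) by (simp add: color_class_def)
    with 2 show ?thesis
      using nlap_gfun[OF hg ij(3)] own other[OF ij(1) v] mu by (simp add: gfun_def)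
  next
    case 3
    then show ?thesis
      using nlap_gfun[OF hg ij(3)] other[OF ij(1) v] other[OF ij(2) v] by (simp add: gfun_def)
  qed
qed
theorem mainTheorem9:
  fixes V :: "'a set" and E :: "'a set set" and c k :: nat and col :: "'a \<Rightarrow> nat"
  assumes hg: "hypergraph V E"
    and Vne: "V \<noteq> {}"
    and c2: "c \<ge> 2"
    and unif: "uniform c E"
    and noiso: "\<forall>v\<in>V. hdeg E v \<ge> 1"
    and k2: "k \<ge> 2"
    and col: "proper_strong_coloring V E k col"
  shows "((\<forall>i\<in>{1..k}. \<forall>j\<in>{1..k}. i \<noteq> j \<longrightarrow> eigenfunction V E (gfun V col i j)) \<longleftrightarrow>
          (\<forall>i\<in>{1..k}. \<forall>v\<in>V.
             real (card {e\<in>E. v \<in> e \<and> e \<inter> color_class V col i \<noteq> {}}) =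
               (if v \<notin> color_class V col i
                then (real c - 1) * real (hdeg E v) / (real k - 1)
                else real (hdeg E v))))
       \<and> ((\<forall>i\<in>{1..k}. \<forall>v\<in>V.
             real (card {e\<in>E. v \<in> e \<and> e \<inter> color_class V col i \<noteq> {}}) =
               (if v \<notin> color_class V col i
                then (real c - 1) * real (hdeg E v) / (real k - 1)
                else real (hdeg E v)))
          \<longrightarrow> (\<forall>i\<in>{1..k}. \<forall>j\<in>{1..k}. i \<noteq> j \<longrightarrow>
                 eigenfunction_with V E (gfun V col i j) ((real k - real c) / (real k - 1))))"
proof -
  note condition_iff = class_incidence_condition_iff_class_balanced[OF hg col, of c]
  have balanced_eigen: "eigenfunction_with V E (gfun V col i j) ((real k - real c) / (real k - 1))"
    if "class_balanced V E c k col" "i \<in> {1..k}" "j \<in> {1..k}" "i \<noteq> j" for i j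
    using class_balanced_imp_eigenfunction_with[OF hg Vne c2 noiso k2 col] that by blast
  have "(\<forall>i\<in>{1..k}. \<forall>j\<in>{1..k}. i \<noteq> j \<longrightarrow> eigenfunction V E (gfun V col i j))
        \<longleftrightarrow> class_balanced V E c k col"
    using eigenfunctions_imp_class_balanced[OF hg unif noiso col] balanced_eigen
    unfolding eigenfunction_def by blast
  then show ?thesis
    using condition_iff balanced_eigen by simp
qed

end
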